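(* Let $A$ be an $n\times n$ Dickson matrix over $\mathbb{F}_{q^n}$ such that $\mathrm{rank}\big(A+\mathrm{diag}(d,d^q,\dots,d^{q^{n-1}})\big)=1$ for some $d\in\mathbb{F}_{q^n}$, and let $B$ be a Dickson matrix such that $A$ and $B$ have equal corresponding principal minors of all orders. Then $A$ is diagonally similar to $B$.
   Context: A Dickson matrix is the $n\times n$ matrix indexed by $\mathbb{Z}_n$ with $A[i|j]=a_{j-i}^{q^i}$ associated to a $q$-polynomial $\sum_{j=0}^{n-1}a_jx^{q^j}\in\mathbb{F}_{q^n}[x]$. Equal corresponding principal minors: $\det A[\alpha|\alpha]=\det B[\alpha|\alpha]$ for all nonempty $\alpha\subseteq\mathbb{Z}_n$. Diagonally similar: $B=D^{-1}AD$ for an invertible diagonal matrix $D$. *)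

theory Defs
  imports "Jordan_Normal_Form.DL_Rank_Submatrix" "Jordan_Normal_Form.Determinant"
    "HOL-Computational_Algebra.Primes"
begin

text \<open>Dickson matrix of the q-polynomial with coefficients a 0, ..., a (n-1),
  rows/columns indexed by 0..n-1 (representing Z_n): entry (i,j) is
  a ((j - i) mod n) raised to the power q^i.\<close>
definition dickson_mat :: "nat \<Rightarrow> nat \<Rightarrow> (nat \<Rightarrow> 'a::field) \<Rightarrow> 'a mat" where
  "dickson_mat q n a = mat n n (\<lambda>(i,j). a ((j + n - i) mod n) ^ (q ^ i))"

definition is_dickson_mat :: "nat \<Rightarrow> nat \<Rightarrow> 'a::field mat \<Rightarrow> bool" where
  "is_dickson_mat q n A \<longleftrightarrow> (\<exists>a. A = dickson_mat q n a)"

definition equal_principal_minors :: "nat \<Rightarrow> 'a::field mat \<Rightarrow> 'a mat \<Rightarrow> bool" where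
  "equal_principal_minors n A B \<longleftrightarrow>
     (\<forall>\<alpha>. \<alpha> \<subseteq> {0..<n} \<longrightarrow> \<alpha> \<noteq> {} \<longrightarrow>
        det (submatrix A \<alpha> \<alpha>) = det (submatrix B \<alpha> \<alpha>))"

definition diagonally_similar :: "nat \<Rightarrow> 'a::field mat \<Rightarrow> 'a mat \<Rightarrow> bool" where
  "diagonally_similar n A B \<longleftrightarrow>
     (\<exists>D Dinv. D \<in> carrier_mat n n \<and> Dinv \<in> carrier_mat n n \<and> diagonal_mat D \<and>
        D * Dinv = 1\<^sub>m n \<and> Dinv * D = 1\<^sub>m n \<and> B = Dinv * A * D)"

end

theory Submission
  imports Defs "HOL-Number_Theory.Residues"
begin

text \<open>Let M = A + diag(d, d^q, ..., d^(q^(n-1))) and c_i = M_ii. As M has rank one, all its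
  2x2 minors vanish. Its diagonal entries are the conjugates (a_0 + d)^(q^i), and they are nonzero:
  a_0 + d = 0 together with the vanishing minors would force M = 0. Off the diagonal A agrees
  with M, so the 2-cycles A_ij A_ji equal c_i c_j and the 3-cycles A_0i A_ij A_j0 equal
  c_0 c_i c_j. Equal principal minors of orders 1 and 2 give B the diagonal and the 2-cycles of A.
  The principal minor on {0, i, j} then says that the two 3-cycles of B on {0, i, j} sum to
  2 c_0 c_i c_j, while their product is a product of 2-cycles, (c_0 c_i c_j)^2; so both equal
  c_0 c_i c_j. The 2-cycles and the 3-cycles through 0 express every entry through the first row,
  whence B = D^-1 A D with D_j = B_0j / A_0j.\<close>

lemma CHAR_eq_prime_of_card:
  fixes p m :: nat
  assumes "prime p" and "card (UNIV :: 'a::{field,finite} set) = p ^ m"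
  shows "CHAR('a) = p"
proof -
  have "prime CHAR('a)" by (simp add: finite_imp_CHAR_pos prime_CHAR_semidom)
  moreover have "CHAR('a) dvd p ^ m" using CHAR_dvd_CARD[where 'a='a] assms(2) by simp
  ultimately show ?thesis using assms(1) by (metis prime_dvd_power primes_dvd_imp_eq)
qed

lemma finite_field_power_add:
  fixes x y :: "'a::{field,finite}"
  assumes "prime p" and "card (UNIV :: 'a set) = p ^ m"
  shows "(x + y) ^ (p ^ j) = x ^ (p ^ j) + y ^ (p ^ j)"
  using CHAR_eq_prime_of_card[OF assms] assms(1) by (intro freshmans_dream') auto

lemma det_mat_2:
  "det (mat 2 2 f) = (f (0,0) * f (1,1) - f (0,1) * f (1,0) :: 'a::comm_ring_1)"
  by (subst laplace_expansion_column[of _ 2 0])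
    (auto simp: cofactor_def mat_delete_def numeral_2_eq_2 lessThan_Suc det_single)

lemma det_mat_3:
  "det (mat 3 3 f) = (f (0,0) * f (1,1) * f (2,2) + f (0,1) * f (1,2) * f (2,0)
     + f (0,2) * f (1,0) * f (2,1) - f (0,0) * f (1,2) * f (2,1)
     - f (0,1) * f (1,0) * f (2,2) - f (0,2) * f (1,1) * f (2,0) :: 'a::comm_ring_1)"
  apply (subst laplace_expansion_column[of _ 3 0])
    apply (auto simp: cofactor_def mat_delete_def numeral_3_eq_3 lessThan_Suc)
  apply (subst det_mat_2[unfolded numeral_2_eq_2])+
  apply (auto simp: insert_index_def numeral_2_eq_2 algebra_simps)
  done

lemma pick_doubleton:
  assumes "i < j"
  shows "pick {i,j} 0 = i" and "pick {i,j} 1 = j"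
proof -
  show first: "pick {i,j} 0 = i" using assms by (auto intro!: Least_equality)
  show "pick {i,j} 1 = j" using assms first by (auto intro!: Least_equality)
qed

lemma pick_triple:
  assumes "i < j" and "j < k"
  shows "pick {i,j,k} 0 = i" and "pick {i,j,k} 1 = j" and "pick {i,j,k} 2 = k"
proof -
  show first: "pick {i,j,k} 0 = i" using assms by (auto intro!: Least_equality)
  show second: "pick {i,j,k} 1 = j" using assms first by (auto intro!: Least_equality)
  have "pick {i,j,k} 2 = pick {i,j,k} (Suc (Suc 0))" by (simp add: numeral_2_eq_2)
  also have "\<dots> = k" using assms second by (auto intro!: Least_equality)
  finally show "pick {i,j,k} 2 = k" .
qed

lemma det_submatrix_singleton:
  assumes "M \<in> carrier_mat n n" and "i < n"
  shows "det (submatrix M {i} {i}) = M $$ (i,i)"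
proof -
  have "{x. x < dim_row M \<and> x \<in> {i}} = {i}" "{x. x < dim_col M \<and> x \<in> {i}} = {i}"
    using assms by auto
  then show ?thesis using assms unfolding submatrix_def
    by (simp add: det_single Least_equality)
qed

lemma det_submatrix_doubleton:
  assumes "M \<in> carrier_mat n n" and "i < k" "k < n" and "j < l" "l < n"
  shows "det (submatrix M {i,k} {j,l}) = M $$ (i,j) * M $$ (k,l) - M $$ (i,l) * M $$ (k,j)"
proof -
  have rows_cols: "{x. x < dim_row M \<and> x \<in> {i,k}} = {i,k}"
    "{x. x < dim_col M \<and> x \<in> {j,l}} = {j,l}"
    using assms by auto
  have "submatrix M {i,k} {j,l} = mat 2 2 (\<lambda>(a,b). M $$ (pick {i,k} a, pick {j,l} b))"
    using assms unfolding submatrix_def rows_cols by auto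
  then show ?thesis using pick_doubleton[of i k] pick_doubleton[of j l] assms by (simp add: det_mat_2)
qed

lemma det_principal_submatrix_triple:
  assumes "M \<in> carrier_mat n n" and "i < j" "j < k" "k < n"
  shows "det (submatrix M {i,j,k} {i,j,k}) =
    M $$ (i,i) * M $$ (j,j) * M $$ (k,k) + M $$ (i,j) * M $$ (j,k) * M $$ (k,i)
    + M $$ (i,k) * M $$ (j,i) * M $$ (k,j) - M $$ (i,i) * M $$ (j,k) * M $$ (k,j)
    - M $$ (i,j) * M $$ (j,i) * M $$ (k,k) - M $$ (i,k) * M $$ (j,j) * M $$ (k,i)"
proof -
  have rows_cols: "{x. x < dim_row M \<and> x \<in> {i,j,k}} = {i,j,k}"
    "{x. x < dim_col M \<and> x \<in> {i,j,k}} = {i,j,k}"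
    using assms by auto
  have "submatrix M {i,j,k} {i,j,k} = mat 3 3 (\<lambda>(a,b). M $$ (pick {i,j,k} a, pick {i,j,k} b))"
    using assms unfolding submatrix_def rows_cols by auto
  then show ?thesis using pick_triple[of i j k] assms by (simp add: det_mat_3)
qed

lemma rank_le_1_minor_eq:
  fixes M :: "'a::field mat"
  assumes M: "M \<in> carrier_mat n n" and rank: "vec_space.rank n M \<le> 1"
    and "i < n" "j < n" "k < n" "l < n"
  shows "M $$ (i,j) * M $$ (k,l) = M $$ (i,l) * M $$ (k,j)"
proof -
  have sorted: "M $$ (i,j) * M $$ (k,l) = M $$ (i,l) * M $$ (k,j)"
    if "i < k" "j < l" "k < n" "l < n" for i j k l
  proof (rule ccontr)
    assume "M $$ (i,j) * M $$ (k,l) \<noteq> M $$ (i,l) * M $$ (k,j)"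
    then have "det (submatrix M {i,k} {j,l}) \<noteq> 0"
      using det_submatrix_doubleton[OF M that(1,3,2,4)] by simp
    from vec_space.rank_gt_minor[OF M this]
    have "card {x. x < n \<and> x \<in> {j,l}} \<le> vec_space.rank n M" .
    moreover have "{x. x < n \<and> x \<in> {j,l}} = {j,l}" using that by auto
    ultimately show False using rank that by auto
  qed
  consider "i = k \<or> j = l" | "i < k" "j < l" | "i < k" "l < j" | "k < i" "j < l" | "k < i" "l < j"
    by linarith
  then show ?thesis
  proof cases
    case 1
    then show ?thesis by (auto simp: mult.commute)
  next
    case 2
    then show ?thesis using sorted[of i k j l] assms by simp
  next
    case 3
    then show ?thesis using sorted[of i k l j] assms by (simp add: mult.commute)
  next
    case 4
    then show ?thesis using sorted[of k i j l] assms by (simp add: mult.commute)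
  next
    case 5
    then show ?thesis using sorted[of k i l j] assms by (simp add: mult.commute)
  qed
qed

lemma rank_le_1_cycle3:
  fixes m :: "nat \<Rightarrow> nat \<Rightarrow> 'a::comm_ring_1"
  assumes minor: "\<And>i j k l. i < n \<Longrightarrow> j < n \<Longrightarrow> k < n \<Longrightarrow> l < n \<Longrightarrow> m i j * m k l = m i l * m k j"
    and "i < n" "j < n" "k < n"
  shows "m i j * m j k * m k i = m i i * m j j * m k k"
proof -
  have ijk: "m i j * m j k = m i k * m j j" and iki: "m i k * m k i = m i i * m k k"
    using minor[of i j j k] minor[of i k k i] assms by auto
  have "m i j * m j k * m k i = (m i k * m k i) * m j j"
    unfolding ijk by (simp add: algebra_simps)
  also have "\<dots> = m i i * m j j * m k k"
    unfolding iki by (simp add: algebra_simps)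
  finally show ?thesis .
qed

lemma eq_if_sum_double_and_prod_square:
  fixes x y c :: "'a::idom"
  assumes "x + y = 2 * c" and "x * y = c * c"
  shows "x = c"
proof -
  have "(x - c) * (x - c) = x * x - (x + y) * x + x * y" using assms by (simp add: algebra_simps)
  also have "\<dots> = 0" by (simp add: algebra_simps)
  finally show ?thesis by simp
qed

lemma entry_eq_of_cycle3:
  fixes g :: "nat \<Rightarrow> nat \<Rightarrow> 'a::field"
  assumes cycle: "g 0 i * g i j * g j 0 = c0 * ci * cj" and pair: "g 0 j * g j 0 = c0 * cj"
    and "c0 \<noteq> 0" "cj \<noteq> 0" "g 0 i \<noteq> 0"
  shows "g i j = ci * g 0 j / g 0 i"
proof -
  have "g 0 i * g i j * (c0 * cj) = (g 0 i * g i j * g j 0) * g 0 j"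
    unfolding pair[symmetric] by (simp add: algebra_simps)
  also have "\<dots> = ci * g 0 j * (c0 * cj)"
    unfolding cycle by (simp add: algebra_simps)
  finally have "g 0 i * g i j = ci * g 0 j" using assms by simp
  then show ?thesis using assms by (simp add: field_simps)
qed

lemma diagonal_scaling_of_cycles:
  fixes f g :: "nat \<Rightarrow> nat \<Rightarrow> 'a::field" and c :: "nat \<Rightarrow> 'a"
  assumes c_nz: "\<And>i. i < n \<Longrightarrow> c i \<noteq> 0"
    and diag: "\<And>i. i < n \<Longrightarrow> g i i = f i i"
    and pair_f: "\<And>i j. i < n \<Longrightarrow> j < n \<Longrightarrow> i \<noteq> j \<Longrightarrow> f i j * f j i = c i * c j"
    and pair_g: "\<And>i j. i < n \<Longrightarrow> j < n \<Longrightarrow> i \<noteq> j \<Longrightarrow> g i j * g j i = c i * c j"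
    and cycle_f: "\<And>i j. i < n \<Longrightarrow> j < n \<Longrightarrow> 0 < i \<Longrightarrow> 0 < j \<Longrightarrow> i \<noteq> j \<Longrightarrow>
      f 0 i * f i j * f j 0 = c 0 * c i * c j"
    and cycle_g: "\<And>i j. i < n \<Longrightarrow> j < n \<Longrightarrow> 0 < i \<Longrightarrow> 0 < j \<Longrightarrow> i \<noteq> j \<Longrightarrow>
      g 0 i * g i j * g j 0 = c 0 * c i * c j"
  shows "\<exists>D. (\<forall>j<n. D j \<noteq> 0) \<and> (\<forall>i<n. \<forall>j<n. g i j = f i j * D j / D i)"
proof -
  define D where "D j = (if j = 0 then 1 else g 0 j / f 0 j)" for j
  have f_nz: "f i j \<noteq> 0" and g_nz: "g i j \<noteq> 0" if "i < n" "j < n" "i \<noteq> j" for i j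
    using pair_f[OF that] pair_g[OF that] c_nz that by auto
  have "g i j = f i j * D j / D i" if ij: "i < n" "j < n" for i j
  proof -
    consider "i = j" | "i = 0" "j \<noteq> 0" | "i \<noteq> 0" "j = 0" | "i \<noteq> 0" "j \<noteq> 0" "i \<noteq> j"
      by force
    then show ?thesis
    proof cases
      case 1
      then show ?thesis using diag ij f_nz[of 0 j] g_nz[of 0 j] by (simp add: D_def)
    next
      case 2
      then show ?thesis using f_nz[of 0 j] ij by (simp add: D_def)
    next
      case 3
      then show ?thesis using pair_f[of 0 i] pair_g[of 0 i] f_nz[of 0 i] g_nz[of 0 i] ij
        by (simp add: D_def field_simps)
    next
      case 4
      have "g i j = c i * g 0 j / g 0 i" "f i j = c i * f 0 j / f 0 i"
        using entry_eq_of_cycle3[of g i j "c 0" "c i" "c j"] entry_eq_of_cycle3[of f i j "c 0" "c i" "c j"]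
          cycle_g[of i j] cycle_f[of i j] pair_g[of 0 j] pair_f[of 0 j]
          c_nz[of 0] c_nz[of j] g_nz[of 0 i] f_nz[of 0 i] ij 4
        by auto
      then show ?thesis using 4 ij f_nz[of 0 i] f_nz[of 0 j] g_nz[of 0 i] g_nz[of 0 j]
        by (simp add: D_def field_simps)
    qed
  qed
  moreover have "\<forall>j<n. D j \<noteq> 0" using f_nz g_nz by (simp add: D_def)
  ultimately show ?thesis by blast
qed

lemma diagonally_similar_if_scaled:
  fixes A B :: "'a::field mat"
  assumes A: "A \<in> carrier_mat n n" and B: "B \<in> carrier_mat n n"
    and D_nz: "\<forall>j<n. D j \<noteq> 0" and scaled: "\<forall>i<n. \<forall>j<n. B $$ (i,j) = A $$ (i,j) * D j / D i"
  shows "diagonally_similar n A B"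
  unfolding diagonally_similar_def
proof (intro exI conjI)
  let ?D = "mat_diag n D" and ?Dinv = "mat_diag n (\<lambda>i. inverse (D i))"
  show "?D \<in> carrier_mat n n" "?Dinv \<in> carrier_mat n n" by auto
  show "diagonal_mat ?D" by (simp add: diagonal_mat_def mat_diag_def)
  have "mat_diag n (\<lambda>i. D i * inverse (D i)) = 1\<^sub>m n"
    and "mat_diag n (\<lambda>i. inverse (D i) * D i) = 1\<^sub>m n"
    using D_nz by (auto intro!: eq_matI simp: mat_diag_def)
  then show "?D * ?Dinv = 1\<^sub>m n" "?Dinv * ?D = 1\<^sub>m n" by simp_all
  have "?Dinv * A * ?D = mat n n (\<lambda>(i,j). inverse (D i) * A $$ (i,j) * D j)"
    unfolding mat_diag_mult_left[OF A] by (subst mat_diag_mult_right) (auto intro!: eq_matI)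
  then show "B = ?Dinv * A * ?D" using A B scaled D_nz by (auto intro!: eq_matI simp: field_simps)
qed

lemma diagonally_similar_if_offdiag_rank_le_1:
  fixes A B M :: "'a::field mat"
  assumes A: "A \<in> carrier_mat n n" and B: "B \<in> carrier_mat n n" and M: "M \<in> carrier_mat n n"
    and rank: "vec_space.rank n M \<le> 1" and diag_nz: "\<And>i. i < n \<Longrightarrow> M $$ (i,i) \<noteq> 0"
    and offdiag: "\<And>i j. i < n \<Longrightarrow> j < n \<Longrightarrow> i \<noteq> j \<Longrightarrow> A $$ (i,j) = M $$ (i,j)"
    and minors: "equal_principal_minors n A B"
  shows "diagonally_similar n A B"
proof -
  let ?f = "\<lambda>i j. A $$ (i,j)" and ?g = "\<lambda>i j. B $$ (i,j)" and ?c = "\<lambda>i. M $$ (i,i)"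
  have minor: "M $$ (i,j) * M $$ (k,l) = M $$ (i,l) * M $$ (k,j)"
    if "i < n" "j < n" "k < n" "l < n" for i j k l
    using rank_le_1_minor_eq[OF M rank that] .
  have epm: "det (submatrix A S S) = det (submatrix B S S)" if "S \<subseteq> {0..<n}" "S \<noteq> {}" for S
    using minors that unfolding equal_principal_minors_def by blast
  have pair_f: "?f i j * ?f j i = ?c i * ?c j" if "i < n" "j < n" "i \<noteq> j" for i j
    using minor[of i j j i] offdiag[of i j] offdiag[of j i] that by simp
  have cycle_f: "?f 0 i * ?f i j * ?f j 0 = ?c 0 * ?c i * ?c j"
    if "i < n" "j < n" "0 < i" "0 < j" "i \<noteq> j" for i j
    using rank_le_1_cycle3[of n "\<lambda>i j. M $$ (i,j)", OF minor, of 0 i j] offdiag[of 0 i]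
      offdiag[of i j] offdiag[of j 0] that by auto
  have diag: "?g i i = ?f i i" if "i < n" for i
    using epm[of "{i}"] det_submatrix_singleton[OF A that] det_submatrix_singleton[OF B that] that
    by auto
  have pair_g_sorted: "?g i j * ?g j i = ?f i j * ?f j i" if "i < j" "j < n" for i j
    using epm[of "{i,j}"] det_submatrix_doubleton[OF A that that] det_submatrix_doubleton[OF B that that]
      diag[of i] diag[of j] that by auto
  have pair_g: "?g i j * ?g j i = ?c i * ?c j" if "i < n" "j < n" "i \<noteq> j" for i j
    using pair_g_sorted[of i j] pair_g_sorted[of j i] pair_f[OF that] that
    by (cases "i < j") (auto simp: mult.commute)
  have cycles_g: "?g 0 i * ?g i j * ?g j 0 = ?c 0 * ?c i * ?c j \<and>
      ?g 0 j * ?g j i * ?g i 0 = ?c 0 * ?c i * ?c j"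
    if "0 < i" "i < j" "j < n" for i j
  proof -
    let ?x = "?g 0 i * ?g i j * ?g j 0" and ?y = "?g 0 j * ?g j i * ?g i 0"
      and ?p = "?c 0 * ?c i * ?c j"
    have "?x + ?y = ?f 0 i * ?f i j * ?f j 0 + ?f 0 j * ?f j i * ?f i 0"
      using epm[of "{0,i,j}"] that
      unfolding det_principal_submatrix_triple[OF A that] det_principal_submatrix_triple[OF B that]
      using diag[of 0] diag[of i] diag[of j] pair_g_sorted[of 0 i] pair_g_sorted[of i j]
        pair_g_sorted[of 0 j]
      by (simp add: algebra_simps)
    also have "\<dots> = 2 * ?p" using cycle_f[of i j] cycle_f[of j i] that by (simp add: algebra_simps)
    finally have sum: "?x + ?y = 2 * ?p" .
    have "?x * ?y = (?g 0 i * ?g i 0) * (?g i j * ?g j i) * (?g j 0 * ?g 0 j)"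
      by (simp add: algebra_simps)
    also have "\<dots> = ?p * ?p" using pair_g[of 0 i] pair_g[of i j] pair_g[of j 0] that
      by (simp add: algebra_simps)
    finally have prod: "?x * ?y = ?p * ?p" .
    show ?thesis using eq_if_sum_double_and_prod_square[OF sum prod]
      eq_if_sum_double_and_prod_square[of ?y ?x ?p] sum prod by (simp add: algebra_simps)
  qed
  have cycle_g: "?g 0 i * ?g i j * ?g j 0 = ?c 0 * ?c i * ?c j"
    if "i < n" "j < n" "0 < i" "0 < j" "i \<noteq> j" for i j
    using cycles_g[of i j] cycles_g[of j i] that by (cases "i < j") (auto simp: algebra_simps)
  obtain D where "\<forall>j<n. D j \<noteq> 0" "\<forall>i<n. \<forall>j<n. B $$ (i,j) = A $$ (i,j) * D j / D i"
    using diagonal_scaling_of_cycles[of n ?c ?g ?f, OF diag_nz diag pair_f pair_g cycle_f cycle_g]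
    by blast
  then show ?thesis using diagonally_similar_if_scaled[OF A B] by blast
qed

lemma dickson_mat_carrier: "dickson_mat q n a \<in> carrier_mat n n"
  by (simp add: dickson_mat_def)

lemma dickson_mat_index:
  "i < n \<Longrightarrow> j < n \<Longrightarrow> dickson_mat q n a $$ (i,j) = a ((j + n - i) mod n) ^ (q ^ i)"
  by (simp add: dickson_mat_def)

lemma dickson_index_eq_0_iff:
  fixes i j n :: nat
  assumes "i < n" and "j < n"
  shows "(j + n - i) mod n = 0 \<longleftrightarrow> i = j"
  using assms by (auto simp: mod_if)

lemma dickson_plus_diag_rank_1_diag_nonzero:
  fixes a :: "nat \<Rightarrow> 'a::{field,finite}"
  assumes p: "prime p" and card: "card (UNIV :: 'a set) = p ^ m" and q: "q = p ^ k"
    and M_def: "M = dickson_mat q n a + mat_diag n (\<lambda>i. d ^ (q ^ i))"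
    and rank: "vec_space.rank n M = 1" and "i < n"
  shows "M $$ (i,i) \<noteq> 0"
proof
  assume "M $$ (i,i) = 0"
  have q_pos: "0 < q" using p q by (simp add: prime_gt_0_nat)
  have M: "M \<in> carrier_mat n n" by (simp add: M_def dickson_mat_carrier)
  have M_index: "M $$ (i,j) = a ((j + n - i) mod n) ^ (q ^ i) + (if i = j then d ^ (q ^ i) else 0)"
    if "i < n" "j < n" for i j
    using that by (simp add: M_def dickson_mat_carrier dickson_mat_index mat_diag_def)
  have M_diag: "M $$ (i,i) = (a 0 + d) ^ (q ^ i)" if "i < n" for i
    using M_index[OF that that] finite_field_power_add[OF p card, of "a 0" d "k * i"]
    by (simp add: q power_mult)
  have diag_0: "M $$ (j,j) = 0" if "j < n" for j
    using \<open>M $$ (i,i) = 0\<close> M_diag[OF \<open>i < n\<close>] M_diag[OF that] q_pos by simp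
  have a_0: "a j = 0" if "0 < j" "j < n" for j
  proof -
    have "M $$ (0,j) * M $$ (n - j, 0) = M $$ (0,0) * M $$ (n - j, j)"
      using rank_le_1_minor_eq[OF M] rank that by simp
    then show ?thesis using M_index[of 0 j] M_index[of "n - j" 0] diag_0[of 0] that by auto
  qed
  have "M = 0\<^sub>m n n"
  proof (rule eq_matI)
    fix i j assume "i < dim_row (0\<^sub>m n n :: 'a mat)" "j < dim_col (0\<^sub>m n n :: 'a mat)"
    then have "i < n" "j < n" by auto
    then show "M $$ (i,j) = 0\<^sub>m n n $$ (i,j)"
      using diag_0[of i] M_index[of i j] a_0[of "(j + n - i) mod n"] dickson_index_eq_0_iff[of i n j]
      by (cases "i = j") (auto simp: q_pos)
  qed (use M in auto)
  then show False using rank by (simp add: vec_space.rank_0I)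
qed

theorem mainTheorem10:
  fixes p k q n :: nat and A B :: "'a::{field,finite} mat" and d :: 'a
  assumes "prime p" and "k \<ge> 1" and "q = p ^ k" and "n \<ge> 1"
    and "card (UNIV :: 'a set) = q ^ n"
    and "is_dickson_mat q n A"
    and "vec_space.rank n (A + mat_diag n (\<lambda>i. d ^ (q ^ i))) = 1"
    and "is_dickson_mat q n B"
    and "equal_principal_minors n A B"
  shows "diagonally_similar n A B"
proof -
  obtain a b where A: "A = dickson_mat q n a" and B: "B = dickson_mat q n b"
    using assms(6,8) unfolding is_dickson_mat_def by blast
  define M where "M = A + mat_diag n (\<lambda>i. d ^ (q ^ i))"
  have card: "card (UNIV :: 'a set) = p ^ (k * n)" using assms(3,5) by (simp add: power_mult)
  have "M $$ (i,i) \<noteq> 0" if "i < n" for i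
    using dickson_plus_diag_rank_1_diag_nonzero[OF assms(1) card assms(3) _ _ that] assms(7)
    by (simp add: M_def A)
  moreover have "A $$ (i,j) = M $$ (i,j)" if "i < n" "j < n" "i \<noteq> j" for i j
    using that by (simp add: M_def A dickson_mat_carrier mat_diag_def)
  moreover have "M \<in> carrier_mat n n" by (simp add: M_def A dickson_mat_carrier)
  ultimately show ?thesis
    using diagonally_similar_if_offdiag_rank_le_1[of A n B M] assms(7,9)
    by (simp add: A B M_def dickson_mat_carrier)
qed

end
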